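(* Let $\mathfrak g=A_2$, $\lambda=m_1\lambda_1+m_2\lambda_2\in\Lambda^+$ and $\mu=u_1\lambda_1+u_2\lambda_2\in\Lambda^+$ with $m^\mu_{\lambda,2}\neq0$. If $m_1\ge m_2$ then $u_1+2u_2\ge2(m_1-m_2)$; if $m_1\le m_2$ then $2u_1+u_2\ge2(m_2-m_1)$.
   Context: $A_2=\mathfrak{sl}_3$ with fundamental weights $\lambda_1,\lambda_2$ and dominant weights $\Lambda^+=\mathbb N\lambda_1+\mathbb N\lambda_2$. The plethysm multiplicities $m^\mu_{\lambda,2}$ are defined by $\psi_2(\mathrm{ch}_\lambda)=\sum_{\mu\in\Lambda^+}m^\mu_{\lambda,2}\mathrm{ch}_\mu$, with $\mathrm{ch}_\lambda$ the formal character of the irreducible representation $V_\lambda$ and $\psi_2(e_\nu)=e_{2\nu}$. *)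

theory Defs
  imports Main
begin

text \<open>Weights of A2 = sl3 in fundamental-weight coordinates: (a,b) stands for
  a*lambda_1 + b*lambda_2.  Elements of the group ring Z[weight lattice]
  (formal characters) are finitely supported functions wt => int.\<close>

type_synonym wt = "int \<times> int"

definition wadd :: "wt \<Rightarrow> wt \<Rightarrow> wt" where
  "wadd x y = (fst x + fst y, snd x + snd y)"

definition wsub :: "wt \<Rightarrow> wt \<Rightarrow> wt" where
  "wsub x y = (fst x - fst y, snd x - snd y)"

definition dominant :: "wt \<Rightarrow> bool" where
  "dominant x \<longleftrightarrow> fst x \<ge> 0 \<and> snd x \<ge> 0"

definition rho :: wt where "rho = (1, 1)"

text \<open>The Weyl group of A2 (order 6) acting on fundamental-weight coordinates,
  with simple reflections s1 (a,b) = (-a, a+b), s2 (a,b) = (a+b, -b);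
  listed as (sign, action) pairs: 1, s1, s2, s1 s2, s2 s1, w0.\<close>

definition weyl :: "(int \<times> (wt \<Rightarrow> wt)) list" where
  "weyl = [ (1,  \<lambda>(a,b). (a, b)),
            (-1, \<lambda>(a,b). (-a, a + b)),
            (-1, \<lambda>(a,b). (a + b, -b)),
            (1,  \<lambda>(a,b). (-a - b, a)),
            (1,  \<lambda>(a,b). (b, -a - b)),
            (-1, \<lambda>(a,b). (-b, -a)) ]"

definition alt :: "wt \<Rightarrow> wt \<Rightarrow> int" where
  "alt \<nu> x = sum_list (map (\<lambda>(s, w). if w \<nu> = x then s else 0) weyl)"

text \<open>Multiplication in the group ring (convolution), for finitely supported f.\<close>
definition conv :: "(wt \<Rightarrow> int) \<Rightarrow> (wt \<Rightarrow> int) \<Rightarrow> wt \<Rightarrow> int" where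
  "conv f g x = (\<Sum>y\<in>{y. f y \<noteq> 0}. f y * g (wsub x y))"

text \<open>Formal character ch_lambda of the irreducible module V_lambda, defined
  via the Weyl character formula ch_lambda * A_rho = A_(lambda+rho)
  (the group ring is a domain, so ch_lambda is uniquely determined).\<close>
definition ch :: "wt \<Rightarrow> wt \<Rightarrow> int" where
  "ch lam = (THE f. finite {x. f x \<noteq> 0} \<and> conv f (alt rho) = alt (wadd lam rho))"

definition psi2 :: "(wt \<Rightarrow> int) \<Rightarrow> wt \<Rightarrow> int" where
  "psi2 f x = (if even (fst x) \<and> even (snd x) then f (fst x div 2, snd x div 2) else 0)"

text \<open>Plethysm multiplicities: psi_2(ch_lambda) = sum over dominant mu of
  m^mu_(lambda,2) ch_mu (the ch_mu, mu dominant, are linearly independent).\<close>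
definition pleth_mult :: "wt \<Rightarrow> wt \<Rightarrow> int" where
  "pleth_mult lam = (THE m. finite {\<mu>. m \<mu> \<noteq> 0} \<and> (\<forall>\<mu>. \<not> dominant \<mu> \<longrightarrow> m \<mu> = 0) \<and>
      psi2 (ch lam) = (\<lambda>x. \<Sum>\<mu>\<in>{\<mu>. m \<mu> \<noteq> 0}. m \<mu> * ch \<mu> x))"

end

theory Submission imports Defs begin

text \<open>
  By the Weyl character formula, the multiplicity of \<open>ch \<mu>\<close> in a Weyl-invariant virtual
  character \<open>F\<close> is the coefficient of \<open>e(\<mu> + \<rho>)\<close> in \<open>F \<cdot> A(\<rho>)\<close>, an alternating sum of
  six values of \<open>F\<close>. For \<open>F = \<psi>\<^sub>2(ch \<lambda>)\<close>, which lives on doubled weights, at most two of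
  them survive, so the plethysm multiplicity is a difference of two weight multiplicities of
  \<open>V(\<lambda>)\<close> at dominant weights differing by an element of the root lattice.
  For \<open>\<lambda> = m1 \<lambda>1 + m2 \<lambda>2\<close> the weight multiplicities are Kostka numbers of the partition
  \<open>(m1 + m2, m2, 0)\<close>. When \<open>m1 \<ge> m2\<close> they are constant, equal to \<open>m2 + 1\<close>, on the weights
  \<open>a \<lambda>1 + b \<lambda>2\<close> of \<open>V(\<lambda>)\<close> with \<open>a, b \<ge> 0\<close> and \<open>a + 2b \<le> m1 - m2\<close>, and both weights lie
  in this triangle as soon as \<open>u1 + 2 u2 < 2 (m1 - m2)\<close>. The case \<open>m1 \<le> m2\<close> follows by the
  duality \<open>(a, b) \<mapsto> (b, a)\<close>.

  The Kostka formula is checked against the Weyl character formula: both sides are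
  Weyl-alternating, so it suffices to compare them at dominant regular weights, where the
  comparison is a piecewise linear identity.
\<close>

section \<open>Kostka numbers\<close>

text \<open>The Kostka number of the partition \<open>(p, q, 0)\<close> and the weight \<open>(c1, c2, c3)\<close> with
  \<open>c1 + c2 + c3 = p + q\<close>, i.e. the multiplicity of the weight with \<open>\<epsilon>\<close>-coordinates
  \<open>(c1, c2, c3)\<close> in the \<open>gl\<^sub>3\<close>-module of highest weight \<open>(p, q, 0)\<close>.\<close>
definition kostka :: "int \<Rightarrow> int \<Rightarrow> int \<Rightarrow> int \<Rightarrow> int \<Rightarrow> int" where
  "kostka p q c1 c2 c3 = max 0 (1 + min (min q (p - q))
     (min (min (min c1 (p - c1)) (min c2 (p - c2))) (min c3 (p - c3))))"

lemma kostka_swap12: "kostka p q c2 c1 c3 = kostka p q c1 c2 c3"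
  unfolding kostka_def by (metis min.commute)

lemma kostka_swap23: "kostka p q c1 c3 c2 = kostka p q c1 c2 c3"
  unfolding kostka_def by (metis min.commute min.assoc)

lemma kostka_dual:
  assumes "p = q + r"
  shows "kostka p r (p - c3) (p - c2) (p - c1) = kostka p q c1 c2 c3"
proof -
  have flip: "min (p - c) (p - (p - c)) = min c (p - c)" for c
    by (simp add: min_def)
  have "min r (p - r) = min q (p - q)"
    using assms by (simp add: min_def)
  then show ?thesis
    unfolding kostka_def flip by (simp only: min.commute min.left_commute)
qed

lemma kostka_nonzero_bounds:
  "kostka p q c1 c2 c3 \<noteq> 0 \<Longrightarrow> 0 \<le> c1 \<and> c1 \<le> p \<and> 0 \<le> c2 \<and> c2 \<le> p \<and> 0 \<le> c3 \<and> c3 \<le> p"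
  unfolding kostka_def by (simp add: max_def min_def split: if_splits)

text \<open>The Weyl character formula at a dominant regular weight \<open>c\<close>: the six terms are
  \<open>sgn w \<cdot> K(c - w(2, 1, 0))\<close>.\<close>
lemma kostka_alternating_sum:
  fixes p q c1 c2 c3 :: int
  assumes "0 \<le> q" "q \<le> p" "c1 > c2" "c2 > c3" "c1 + c2 + c3 = p + q + 3"
  shows "kostka p q (c1 - 2) (c2 - 1) c3 - kostka p q (c1 - 1) (c2 - 2) c3
     - kostka p q (c1 - 2) c2 (c3 - 1) + kostka p q c1 (c2 - 2) (c3 - 1)
     + kostka p q (c1 - 1) c2 (c3 - 2) - kostka p q c1 (c2 - 1) (c3 - 2)
     = (if c1 = p + 2 \<and> c2 = q + 1 then 1 else 0)"
  using assms unfolding kostka_def min_def max_def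
  supply [[smt_timeout = 1000]] by (smt (verit))

lemma eps_coordinates:
  fixes n :: int and x :: wt
  obtains c1 c2 c3 where "x = (c1 - c2, c2 - c3)" "c1 + c2 + c3 = n"
    | "\<not> 3 dvd (n - fst x - 2 * snd x)"
proof (cases "3 dvd (n - fst x - 2 * snd x)")
  case True
  then obtain k where "n - fst x - 2 * snd x = 3 * k" by blast
  then show ?thesis
    using that(1)[of "k + snd x + fst x" "k + snd x" k] by (cases x) simp
qed (use that in blast)

text \<open>The weight \<open>a \<lambda>1 + b \<lambda>2\<close> of \<open>V(m1 \<lambda>1 + m2 \<lambda>2)\<close> has \<open>\<epsilon>\<close>-coordinates \<open>(c1, c2, c3)\<close>
  with \<open>a = c1 - c2\<close>, \<open>b = c2 - c3\<close> and \<open>c1 + c2 + c3 = m1 + 2 m2\<close>; such coordinates exist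
  only if \<open>3\<close> divides \<open>m1 + 2 m2 - a - 2 b\<close>.\<close>
definition weight_mult :: "int \<Rightarrow> int \<Rightarrow> wt \<Rightarrow> int" where
  "weight_mult m1 m2 x =
     (let t = m1 + 2 * m2 - fst x - 2 * snd x
      in if 3 dvd t then kostka (m1 + m2) m2 (t div 3 + snd x + fst x) (t div 3 + snd x) (t div 3)
         else 0)"

lemma weight_mult_eps:
  assumes "a = c1 - c2" "b = c2 - c3" "c1 + c2 + c3 = m1 + 2 * m2"
  shows "weight_mult m1 m2 (a, b) = kostka (m1 + m2) m2 c1 c2 c3"
proof -
  have t: "m1 + 2 * m2 - a - 2 * b = 3 * c3"
    using assms by simp
  show ?thesis
    unfolding weight_mult_def Let_def fst_conv snd_conv t using assms by simp
qed

lemma weight_mult_off_class: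
  "\<not> 3 dvd (m1 + 2 * m2 - a - 2 * b) \<Longrightarrow> weight_mult m1 m2 (a, b) = 0"
  unfolding weight_mult_def by simp

lemma finite_support_weight_mult: "finite {x. weight_mult m1 m2 x \<noteq> 0}"
proof (rule finite_subset)
  let ?B = "{- (m1 + m2) .. m1 + m2}"
  show "{x. weight_mult m1 m2 x \<noteq> 0} \<subseteq> ?B \<times> ?B"
  proof
    fix x assume x: "x \<in> {x. weight_mult m1 m2 x \<noteq> 0}"
    show "x \<in> ?B \<times> ?B"
    proof (cases x rule: eps_coordinates[where n = "m1 + 2 * m2"])
      case (1 c1 c2 c3)
      with x have "kostka (m1 + m2) m2 c1 c2 c3 \<noteq> 0"
        by (simp add: weight_mult_eps[of _ c1 c2 _ c3])
      with 1 show ?thesis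
        by (auto dest: kostka_nonzero_bounds)
    next
      case 2
      with x show ?thesis
        by (cases x) (simp add: weight_mult_off_class)
    qed
  qed
qed simp

definition weyl_invariant :: "(wt \<Rightarrow> int) \<Rightarrow> bool" where
  "weyl_invariant f \<longleftrightarrow> (\<forall>a b. f (- a, a + b) = f (a, b) \<and> f (a + b, - b) = f (a, b))"

definition weyl_alternating :: "(wt \<Rightarrow> int) \<Rightarrow> bool" where
  "weyl_alternating f \<longleftrightarrow> (\<forall>a b. f (- a, a + b) = - f (a, b) \<and> f (a + b, - b) = - f (a, b))"

lemma weyl_invariant_diff:
  "weyl_invariant f \<Longrightarrow> weyl_invariant g \<Longrightarrow> weyl_invariant (\<lambda>x. f x - g x)"
  unfolding weyl_invariant_def by simp

lemma weyl_invariant_sum: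
  "(\<And>\<mu>. \<mu> \<in> S \<Longrightarrow> weyl_invariant (g \<mu>)) \<Longrightarrow> weyl_invariant (\<lambda>x. \<Sum>\<mu>\<in>S. c \<mu> * g \<mu> x)"
  unfolding weyl_invariant_def by (auto intro!: sum.cong)

lemma weyl_invariant_weight_mult: "weyl_invariant (weight_mult m1 m2)"
  unfolding weyl_invariant_def
proof (intro allI conjI)
  fix a b
  let ?p = "m1 + m2"
  show "weight_mult m1 m2 (- a, a + b) = weight_mult m1 m2 (a, b)"
  proof (cases "(a, b)" rule: eps_coordinates[where n = "m1 + 2 * m2"])
    case (1 c1 c2 c3)
    have "weight_mult m1 m2 (- a, a + b) = kostka ?p m2 c2 c1 c3"
      by (rule weight_mult_eps) (use 1 in auto)
    also have "\<dots> = kostka ?p m2 c1 c2 c3"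
      by (rule kostka_swap12)
    also have "\<dots> = weight_mult m1 m2 (a, b)"
      by (rule weight_mult_eps[symmetric]) (use 1 in auto)
    finally show ?thesis .
  next
    case 2
    then have "\<not> 3 dvd (m1 + 2 * m2 - (- a) - 2 * (a + b))" by simp presburger
    with 2 show ?thesis by (simp add: weight_mult_off_class)
  qed
  show "weight_mult m1 m2 (a + b, - b) = weight_mult m1 m2 (a, b)"
  proof (cases "(a, b)" rule: eps_coordinates[where n = "m1 + 2 * m2"])
    case (1 c1 c2 c3)
    have "weight_mult m1 m2 (a + b, - b) = kostka ?p m2 c1 c3 c2"
      by (rule weight_mult_eps) (use 1 in auto)
    also have "\<dots> = kostka ?p m2 c1 c2 c3"
      by (rule kostka_swap23)
    also have "\<dots> = weight_mult m1 m2 (a, b)"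
      by (rule weight_mult_eps[symmetric]) (use 1 in auto)
    finally show ?thesis .
  next
    case 2
    then have "\<not> 3 dvd (m1 + 2 * m2 - (a + b) - 2 * (- b))" by simp presburger
    with 2 show ?thesis by (simp add: weight_mult_off_class)
  qed
qed

lemma weight_mult_dual: "weight_mult m2 m1 (b, a) = weight_mult m1 m2 (a, b)"
proof (cases "(a, b)" rule: eps_coordinates[where n = "m1 + 2 * m2"])
  case (1 c1 c2 c3)
  let ?p = "m1 + m2"
  have "weight_mult m2 m1 (b, a) = kostka (m2 + m1) m1 (?p - c3) (?p - c2) (?p - c1)"
    by (rule weight_mult_eps) (use 1 in auto)
  also have "\<dots> = kostka ?p m2 c1 c2 c3"
    by (simp add: add.commute kostka_dual)
  also have "\<dots> = weight_mult m1 m2 (a, b)"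
    by (rule weight_mult_eps[symmetric]) (use 1 in auto)
  finally show ?thesis .
next
  case 2
  then have "\<not> 3 dvd (m2 + 2 * m1 - b - 2 * a)" by simp presburger
  with 2 show ?thesis by (simp add: weight_mult_off_class)
qed

lemma weight_mult_inner_triangle:
  assumes "0 \<le> m2" "m2 \<le> m1" "0 \<le> a" "0 \<le> b" "a + 2 * b < m1 - m2 + 3"
  shows "weight_mult m1 m2 (a, b) = (if 3 dvd (m1 + 2 * m2 - a - 2 * b) then m2 + 1 else 0)"
proof (cases "(a, b)" rule: eps_coordinates[where n = "m1 + 2 * m2"])
  case (1 c1 c2 c3)
  then have ab: "a = c1 - c2" "b = c2 - c3" and sum: "c1 + c2 + c3 = m1 + 2 * m2"
    by auto
  then have t: "m1 + 2 * m2 - a - 2 * b = 3 * c3"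
    by simp
  with assms have "m2 \<le> c3"
    by presburger
  moreover from this ab sum assms have "c3 \<le> c2" "c2 \<le> c1" "c1 \<le> m1"
    by linarith+
  ultimately show ?thesis
    using weight_mult_eps[OF ab sum] t assms by (simp add: kostka_def min_def max_def)
next
  case 2
  then show ?thesis by (simp add: weight_mult_off_class)
qed

lemma finite_support_diff:
  "finite {x. f x \<noteq> 0} \<Longrightarrow> finite {x. g x \<noteq> 0} \<Longrightarrow> finite {x. f x - g x \<noteq> (0::int)}"
  by (rule finite_subset[of _ "{x. f x \<noteq> 0} \<union> {x. g x \<noteq> 0}"]) auto

lemma finite_support_sum:
  assumes "finite S" "\<And>\<mu>. \<mu> \<in> S \<Longrightarrow> finite {x. g \<mu> x \<noteq> 0}"
  shows "finite {x. (\<Sum>\<mu>\<in>S. c \<mu> * g \<mu> x) \<noteq> (0::int)}"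
proof (rule finite_subset)
  show "{x. (\<Sum>\<mu>\<in>S. c \<mu> * g \<mu> x) \<noteq> 0} \<subseteq> (\<Union>\<mu>\<in>S. {x. g \<mu> x \<noteq> 0})"
    by (auto intro: ccontr simp: sum.neutral)
qed (use assms in auto)

definition times_alt_rho :: "(wt \<Rightarrow> int) \<Rightarrow> wt \<Rightarrow> int" where
  "times_alt_rho f x =
     f (fst x - 1, snd x - 1) - f (fst x + 1, snd x - 2) - f (fst x - 2, snd x + 1)
     + f (fst x + 2, snd x - 1) + f (fst x - 1, snd x + 2) - f (fst x + 1, snd x + 1)"

lemma times_alt_rho_Pair:
  "times_alt_rho f (a, b) =
     f (a - 1, b - 1) - f (a + 1, b - 2) - f (a - 2, b + 1)
     + f (a + 2, b - 1) + f (a - 1, b + 2) - f (a + 1, b + 1)"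
  by (simp add: times_alt_rho_def)

lemma times_alt_rho_diff:
  "times_alt_rho (\<lambda>x. f x - g x) x = times_alt_rho f x - times_alt_rho g x"
  by (simp add: times_alt_rho_def)

lemma times_alt_rho_sum:
  "times_alt_rho (\<lambda>x. \<Sum>\<mu>\<in>S. c \<mu> * g \<mu> x) x = (\<Sum>\<mu>\<in>S. c \<mu> * times_alt_rho (g \<mu>) x)"
  by (simp add: times_alt_rho_def sum_subtractf sum.distrib algebra_simps)

lemma finite_support_times_alt_rho:
  assumes "finite {x. f x \<noteq> 0}"
  shows "finite {x. times_alt_rho f x \<noteq> 0}"
proof (rule finite_subset)
  let ?D = "{(1, 1), (-1, 2), (2, -1), (-2, 1), (1, -2), (-1, -1)} :: wt set"
  show "{x. times_alt_rho f x \<noteq> 0} \<subseteq> (\<Union>d\<in>?D. (\<lambda>y. wadd y d) ` {x. f x \<noteq> 0})"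
  proof
    fix x
    assume "x \<in> {x. times_alt_rho f x \<noteq> 0}"
    then have "\<not> (\<forall>d\<in>?D. f (wsub x d) = 0)"
      by (cases x) (auto simp: times_alt_rho_Pair wsub_def)
    then obtain d where "d \<in> ?D" "f (wsub x d) \<noteq> 0" by blast
    moreover have "x = wadd (wsub x d) d"
      by (simp add: wadd_def wsub_def)
    ultimately show "x \<in> (\<Union>d\<in>?D. (\<lambda>y. wadd y d) ` {x. f x \<noteq> 0})"
      by blast
  qed
qed (use assms in simp)

lemma conv_delta:
  assumes "finite {y. f y \<noteq> 0}"
  shows "conv f (\<lambda>z. if v = z then s else 0) x = s * f (wsub x v)"
proof -
  have "v = wsub x y \<longleftrightarrow> y = wsub x v" for y
    by (cases x; cases y; cases v) (auto simp: wsub_def)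
  then have "conv f (\<lambda>z. if v = z then s else 0) x
      = (\<Sum>y\<in>{y. f y \<noteq> 0}. if y = wsub x v then s * f y else 0)"
    unfolding conv_def by (intro sum.cong) auto
  also have "\<dots> = s * f (wsub x v)"
    using assms by (simp add: sum.delta)
  finally show ?thesis .
qed

lemma conv_alt:
  assumes "finite {y. f y \<noteq> 0}"
  shows "conv f (alt \<nu>) x = (\<Sum>(s, w)\<leftarrow>weyl. s * f (wsub x (w \<nu>)))"
proof -
  have "conv f (\<lambda>z. \<Sum>(s, w)\<leftarrow>ws. if w \<nu> = z then s else 0) x
      = (\<Sum>(s, w)\<leftarrow>ws. s * f (wsub x (w \<nu>)))" for ws :: "(int \<times> (wt \<Rightarrow> wt)) list"
  proof (induction ws)
    case Nil
    then show ?case by (simp add: conv_def)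
  next
    case (Cons sw ws)
    obtain s w where sw: "sw = (s, w)" by fastforce
    have "conv f (\<lambda>z. (if w \<nu> = z then s else 0) + (\<Sum>(s, w)\<leftarrow>ws. if w \<nu> = z then s else 0)) x
        = conv f (\<lambda>z. if w \<nu> = z then s else 0) x
          + conv f (\<lambda>z. \<Sum>(s, w)\<leftarrow>ws. if w \<nu> = z then s else 0) x"
      by (simp add: conv_def distrib_left sum.distrib)
    then show ?case
      using Cons.IH by (simp add: sw conv_delta[OF assms])
  qed
  from this[of weyl] show ?thesis
    unfolding alt_def[abs_def] .
qed

lemma conv_alt_rho:
  assumes "finite {y. f y \<noteq> 0}"
  shows "conv f (alt rho) = times_alt_rho f"
  by (rule ext) (simp add: conv_alt[OF assms] weyl_def rho_def wsub_def times_alt_rho_def)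

lemma alt_Pair:
  "alt (n1, n2) z =
     (if (n1, n2) = z then 1 else 0) - (if (- n1, n1 + n2) = z then 1 else 0)
     - (if (n1 + n2, - n2) = z then 1 else 0) + (if (- n1 - n2, n1) = z then 1 else 0)
     + (if (n2, - n1 - n2) = z then 1 else 0) - (if (- n2, - n1) = z then 1 else 0)"
  by (simp add: alt_def weyl_def)

lemma alt_dominant:
  assumes "dominant \<mu>" "dominant \<mu>'"
  shows "alt (wadd \<mu> rho) (wadd \<mu>' rho) = (if \<mu> = \<mu>' then 1 else 0)"
  using assms by (cases \<mu>; cases \<mu>') (auto simp: alt_def weyl_def wadd_def rho_def dominant_def)

lemma weyl_alternating_alt: "weyl_alternating (alt \<nu>)"
proof -
  obtain n1 n2 where \<nu>: "\<nu> = (n1, n2)" by fastforce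
  have s1: "alt \<nu> (- a, a + b) = - alt \<nu> (a, b)" for a b
  proof -
    have "((n1, n2) = (- a, a + b)) = ((- n1, n1 + n2) = (a, b))"
      "((- n1, n1 + n2) = (- a, a + b)) = ((n1, n2) = (a, b))"
      "((n1 + n2, - n2) = (- a, a + b)) = ((- n1 - n2, n1) = (a, b))"
      "((- n1 - n2, n1) = (- a, a + b)) = ((n1 + n2, - n2) = (a, b))"
      "((n2, - n1 - n2) = (- a, a + b)) = ((- n2, - n1) = (a, b))"
      "((- n2, - n1) = (- a, a + b)) = ((n2, - n1 - n2) = (a, b))"
      by auto
    then show ?thesis unfolding \<nu> alt_Pair by simp
  qed
  have s2: "alt \<nu> (a + b, - b) = - alt \<nu> (a, b)" for a b
  proof -
    have "((n1, n2) = (a + b, - b)) = ((n1 + n2, - n2) = (a, b))"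
      "((- n1, n1 + n2) = (a + b, - b)) = ((n2, - n1 - n2) = (a, b))"
      "((n1 + n2, - n2) = (a + b, - b)) = ((n1, n2) = (a, b))"
      "((- n1 - n2, n1) = (a + b, - b)) = ((- n2, - n1) = (a, b))"
      "((n2, - n1 - n2) = (a + b, - b)) = ((- n1, n1 + n2) = (a, b))"
      "((- n2, - n1) = (a + b, - b)) = ((- n1 - n2, n1) = (a, b))"
      by auto
    then show ?thesis unfolding \<nu> alt_Pair by simp
  qed
  show ?thesis
    unfolding weyl_alternating_def using s1 s2 by blast
qed

lemma weyl_alternating_times_alt_rho:
  assumes "weyl_invariant f"
  shows "weyl_alternating (times_alt_rho f)"
  unfolding weyl_alternating_def
proof (intro allI conjI)
  fix a b
  have s1: "f (u, v) = f (- u, u + v)" and s2: "f (u, v) = f (u + v, - v)" for u v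
    using assms unfolding weyl_invariant_def by (metis add.commute add_minus_cancel minus_minus)+
  show "times_alt_rho f (- a, a + b) = - times_alt_rho f (a, b)"
    unfolding times_alt_rho_Pair
    using s1[of "- a - 1" "a + b - 1"] s1[of "- a + 1" "a + b - 2"] s1[of "- a - 2" "a + b + 1"]
      s1[of "- a + 2" "a + b - 1"] s1[of "- a - 1" "a + b + 2"] s1[of "- a + 1" "a + b + 1"]
    by (simp add: algebra_simps)
  show "times_alt_rho f (a + b, - b) = - times_alt_rho f (a, b)"
    unfolding times_alt_rho_Pair
    using s2[of "a + b - 1" "- b - 1"] s2[of "a + b + 1" "- b - 2"] s2[of "a + b - 2" "- b + 1"]
      s2[of "a + b + 2" "- b - 1"] s2[of "a + b - 1" "- b + 2"] s2[of "a + b + 1" "- b + 1"]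
    by (simp add: algebra_simps)
qed

lemma weyl_alternating_diff:
  "weyl_alternating f \<Longrightarrow> weyl_alternating g \<Longrightarrow> weyl_alternating (\<lambda>x. f x - g x)"
  unfolding weyl_alternating_def by simp

lemma weyl_alternating_eq_0:
  assumes "weyl_alternating g" and regular: "\<And>a b. 1 \<le> a \<Longrightarrow> 1 \<le> b \<Longrightarrow> g (a, b) = 0"
  shows "g x = 0"
proof (cases x)
  case (Pair a b)
  have s1: "g (- a, a + b) = - g (a, b)" and s2: "g (a + b, - b) = - g (a, b)" for a b
    using assms(1) unfolding weyl_alternating_def by auto
  have w0: "g (- b, - a) = - g (a, b)"
    using s1[of a b] s2[of "- a" "a + b"] s1[of b "- a - b"] by simp
  consider "a \<ge> 1" "b \<ge> 1" | "a = 0" | "b = 0" | "a + b = 0" | "a < 0" "a + b > 0"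
    | "b < 0" "a + b > 0" | "a > 0" "a + b < 0" | "b > 0" "a + b < 0" | "a < 0" "b < 0"
    by linarith
  then have "g (a, b) = 0"
  proof cases
    case 1 then show ?thesis by (rule regular)
  next
    case 2 then show ?thesis using s1[of 0 b] by simp
  next
    case 3 then show ?thesis using s2[of a 0] by simp
  next
    case 4 then show ?thesis using w0 by (simp add: eq_neg_iff_add_eq_0[symmetric])
  next
    case 5 then show ?thesis using s1[of a b] regular[of "- a" "a + b"] by simp
  next
    case 6 then show ?thesis using s2[of a b] regular[of "a + b" "- b"] by simp
  next
    case 7 then show ?thesis using s2[of a b] s1[of "a + b" "- b"] regular[of "- a - b" a] by simp
  next
    case 8 then show ?thesis using s1[of a b] s2[of "- a" "a + b"] regular[of b "- a - b"] by simp
  next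
    case 9 then show ?thesis using w0 regular[of "- b" "- a"] by simp
  qed
  with Pair show ?thesis by simp
qed

lemma times_alt_rho_eq_0D:
  assumes fin: "finite {y. f y \<noteq> 0}" and zero: "\<And>x. times_alt_rho f x = 0"
  shows "f y = 0"
proof (rule ccontr)
  let ?S = "{y. f y \<noteq> 0}"
  assume "f y \<noteq> 0"
  then have "?S \<noteq> {}" by blast
  define m where "m = Max ((\<lambda>z. fst z + snd z) ` ?S)"
  have "m \<in> (\<lambda>z. fst z + snd z) ` ?S"
    unfolding m_def using fin \<open>?S \<noteq> {}\<close> by (intro Max_in) auto
  then obtain a b where ab: "f (a, b) \<noteq> 0" and m: "m = a + b" by auto
  have beyond: "f (c, d) = 0" if "c + d > m" for c d
  proof (rule ccontr)
    assume "f (c, d) \<noteq> 0"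
    then have "c + d \<in> (\<lambda>z. fst z + snd z) ` ?S" by force
    then have "c + d \<le> m" unfolding m_def using fin by (intro Max_ge) auto
    with that show False by simp
  qed
  have "times_alt_rho f (a + 1, b + 1) = f (a, b)"
    unfolding times_alt_rho_Pair by (simp add: beyond m)
  then show False using zero ab by simp
qed

lemma weyl_invariant_eq_0:
  assumes fin: "finite {x. f x \<noteq> 0}" and inv: "weyl_invariant f"
    and dom: "\<And>\<mu>. dominant \<mu> \<Longrightarrow> times_alt_rho f (wadd \<mu> rho) = 0"
  shows "f x = 0"
proof (rule times_alt_rho_eq_0D[OF fin])
  fix y
  show "times_alt_rho f y = 0"
  proof (rule weyl_alternating_eq_0[OF weyl_alternating_times_alt_rho[OF inv]])
    fix a b :: int
    assume "1 \<le> a" "1 \<le> b"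
    then show "times_alt_rho f (a, b) = 0"
      using dom[of "(a - 1, b - 1)"] by (simp add: dominant_def wadd_def rho_def)
  qed
qed

section \<open>The Weyl character formula\<close>

lemma times_alt_rho_weight_mult:
  assumes "0 \<le> m1" "0 \<le> m2"
  shows "times_alt_rho (weight_mult m1 m2) x = alt (wadd (m1, m2) rho) x"
proof -
  let ?g = "\<lambda>x. times_alt_rho (weight_mult m1 m2) x - alt (wadd (m1, m2) rho) x"
  have "?g x = 0"
  proof (rule weyl_alternating_eq_0)
    show "weyl_alternating ?g"
      by (intro weyl_alternating_diff weyl_alternating_times_alt_rho weyl_invariant_weight_mult
          weyl_alternating_alt)
  next
    fix a b :: int
    assume "1 \<le> a" "1 \<le> b"
    then have alt_ab: "alt (wadd (m1, m2) rho) (a, b) = (if (m1, m2) = (a - 1, b - 1) then 1 else 0)"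
      using alt_dominant[of "(m1, m2)" "(a - 1, b - 1)"] assms
      by (simp add: dominant_def wadd_def rho_def)
    show "?g (a, b) = 0"
    proof (cases "(a, b)" rule: eps_coordinates[where n = "m1 + 2 * m2 + 3"])
      case (1 c1 c2 c3)
      have shift: "weight_mult m1 m2 (a - (s1 - s2), b - (s2 - s3))
          = kostka (m1 + m2) m2 (c1 - s1) (c2 - s2) (c3 - s3)" if "s1 + s2 + s3 = 3" for s1 s2 s3
        by (rule weight_mult_eps) (use 1 that in auto)
      have "times_alt_rho (weight_mult m1 m2) (a, b)
          = (if c1 = m1 + m2 + 2 \<and> c2 = m2 + 1 then 1 else 0)"
        using shift[of 2 1 0] shift[of 1 2 0] shift[of 2 0 1] shift[of 0 2 1] shift[of 1 0 2]
          shift[of 0 1 2] kostka_alternating_sum[where p = "m1 + m2" and q = m2] 1 assms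
          \<open>1 \<le> a\<close> \<open>1 \<le> b\<close>
        by (simp add: times_alt_rho_Pair)
      with 1 alt_ab show ?thesis by auto
    next
      case 2
      then have off_ab: "\<not> 3 dvd (m1 + 2 * m2 + 3 - a - 2 * b)" by simp
      have off: "weight_mult m1 m2 (a + d1, b + d2) = 0" if "3 dvd (d1 + 2 * d2)" for d1 d2
        by (rule weight_mult_off_class) (use off_ab that in presburger)
      have "(m1, m2) \<noteq> (a - 1, b - 1)"
        using off_ab by auto
      then show ?thesis
        using off[of "-1" "-1"] off[of 1 "-2"] off[of "-2" 1] off[of 2 "-1"] off[of "-1" 2]
          off[of 1 1] alt_ab
        by (simp add: times_alt_rho_Pair)
    qed
  qed
  then show ?thesis by simp
qed

lemma ch_eq_weight_mult:
  assumes "0 \<le> m1" "0 \<le> m2"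
  shows "ch (m1, m2) = weight_mult m1 m2"
  unfolding ch_def
proof (rule the_equality)
  have "conv (weight_mult m1 m2) (alt rho) = alt (wadd (m1, m2) rho)"
    unfolding conv_alt_rho[OF finite_support_weight_mult]
    by (rule ext) (rule times_alt_rho_weight_mult[OF assms])
  then show "finite {x. weight_mult m1 m2 x \<noteq> 0}
      \<and> conv (weight_mult m1 m2) (alt rho) = alt (wadd (m1, m2) rho)"
    using finite_support_weight_mult by blast
next
  fix f
  assume f: "finite {x. f x \<noteq> 0} \<and> conv f (alt rho) = alt (wadd (m1, m2) rho)"
  then have "times_alt_rho f = alt (wadd (m1, m2) rho)"
    using conv_alt_rho[of f] by simp
  then have zero: "times_alt_rho (\<lambda>x. f x - weight_mult m1 m2 x) x = 0" for x
    unfolding times_alt_rho_diff using times_alt_rho_weight_mult[OF assms] by simp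
  have fin: "finite {x. f x - weight_mult m1 m2 x \<noteq> 0}"
    using f finite_support_weight_mult by (intro finite_support_diff) auto
  show "f = weight_mult m1 m2"
    using times_alt_rho_eq_0D[OF fin zero] by auto
qed

lemma ch_dominant: "dominant \<mu> \<Longrightarrow> ch \<mu> = weight_mult (fst \<mu>) (snd \<mu>)"
  using ch_eq_weight_mult[of "fst \<mu>" "snd \<mu>"] by (simp add: dominant_def)

lemma times_alt_rho_ch: "dominant \<mu> \<Longrightarrow> times_alt_rho (ch \<mu>) x = alt (wadd \<mu> rho) x"
  using times_alt_rho_weight_mult[of "fst \<mu>" "snd \<mu>"] by (simp add: ch_dominant dominant_def)

lemma finite_support_ch: "dominant \<mu> \<Longrightarrow> finite {x. ch \<mu> x \<noteq> 0}"
  by (simp add: ch_dominant finite_support_weight_mult)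

lemma weyl_invariant_ch: "dominant \<mu> \<Longrightarrow> weyl_invariant (ch \<mu>)"
  by (simp add: ch_dominant weyl_invariant_weight_mult)

text \<open>By the Weyl character formula, the coefficient of \<open>ch \<mu>\<close> in a Weyl-invariant \<open>F\<close> is
  the coefficient of \<open>e(\<mu> + \<rho>)\<close> in \<open>F \<cdot> A(\<rho>)\<close>.\<close>
definition char_mult :: "(wt \<Rightarrow> int) \<Rightarrow> wt \<Rightarrow> int" where
  "char_mult F \<mu> = (if dominant \<mu> then times_alt_rho F (wadd \<mu> rho) else 0)"

lemma finite_support_char_mult:
  assumes "finite {x. F x \<noteq> 0}"
  shows "finite {\<mu>. char_mult F \<mu> \<noteq> 0}"
proof (rule finite_subset)
  show "{\<mu>. char_mult F \<mu> \<noteq> 0} \<subseteq> (\<lambda>x. wsub x rho) ` {x. times_alt_rho F x \<noteq> 0}"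
  proof
    fix \<mu>
    assume "\<mu> \<in> {\<mu>. char_mult F \<mu> \<noteq> 0}"
    moreover have "\<mu> = wsub (wadd \<mu> rho) rho"
      by (simp add: wadd_def wsub_def)
    ultimately show "\<mu> \<in> (\<lambda>x. wsub x rho) ` {x. times_alt_rho F x \<noteq> 0}"
      unfolding char_mult_def by (auto split: if_splits)
  qed
qed (use assms finite_support_times_alt_rho in simp)

lemma times_alt_rho_char_sum:
  assumes "finite S" "\<And>\<mu>. \<mu> \<in> S \<Longrightarrow> dominant \<mu>" "dominant \<nu>"
  shows "times_alt_rho (\<lambda>x. \<Sum>\<mu>\<in>S. c \<mu> * ch \<mu> x) (wadd \<nu> rho) = (if \<nu> \<in> S then c \<nu> else 0)"
proof -
  have "times_alt_rho (\<lambda>x. \<Sum>\<mu>\<in>S. c \<mu> * ch \<mu> x) (wadd \<nu> rho)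
      = (\<Sum>\<mu>\<in>S. if \<mu> = \<nu> then c \<mu> else 0)"
    unfolding times_alt_rho_sum using assms
    by (intro sum.cong) (simp_all add: times_alt_rho_ch alt_dominant)
  also have "\<dots> = (if \<nu> \<in> S then c \<nu> else 0)"
    using assms(1) by (simp add: sum.delta')
  finally show ?thesis .
qed

lemma char_expansion:
  assumes fin: "finite {x. F x \<noteq> 0}" and inv: "weyl_invariant F"
  shows "F = (\<lambda>x. \<Sum>\<mu>\<in>{\<mu>. char_mult F \<mu> \<noteq> 0}. char_mult F \<mu> * ch \<mu> x)"
proof -
  let ?S = "{\<mu>. char_mult F \<mu> \<noteq> 0}"
  let ?G = "\<lambda>x. \<Sum>\<mu>\<in>?S. char_mult F \<mu> * ch \<mu> x"
  have finS: "finite ?S"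
    using fin by (rule finite_support_char_mult)
  have domS: "dominant \<mu>" if "\<mu> \<in> ?S" for \<mu>
    using that unfolding char_mult_def by (auto split: if_splits)
  have "F x - ?G x = 0" for x
  proof (rule weyl_invariant_eq_0)
    show "finite {x. F x - ?G x \<noteq> 0}"
      by (rule finite_support_diff[OF fin finite_support_sum[OF finS finite_support_ch[OF domS]]])
    show "weyl_invariant (\<lambda>x. F x - ?G x)"
      by (rule weyl_invariant_diff[OF inv weyl_invariant_sum[OF weyl_invariant_ch[OF domS]]])
    fix \<mu>
    assume "dominant \<mu>"
    have "times_alt_rho ?G (wadd \<mu> rho) = (if \<mu> \<in> ?S then char_mult F \<mu> else 0)"
      using finS domS \<open>dominant \<mu>\<close> by (rule times_alt_rho_char_sum)
    moreover have "char_mult F \<mu> = times_alt_rho F (wadd \<mu> rho)"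
      using \<open>dominant \<mu>\<close> by (simp add: char_mult_def)
    ultimately show "times_alt_rho (\<lambda>x. F x - ?G x) (wadd \<mu> rho) = 0"
      unfolding times_alt_rho_diff by auto
  qed
  then show ?thesis
    by (simp add: fun_eq_iff)
qed

lemma char_expansion_unique:
  assumes "finite {\<mu>. m \<mu> \<noteq> 0}" and non_dom: "\<And>\<mu>. \<not> dominant \<mu> \<Longrightarrow> m \<mu> = 0"
    and F: "F = (\<lambda>x. \<Sum>\<mu>\<in>{\<mu>. m \<mu> \<noteq> 0}. m \<mu> * ch \<mu> x)"
  shows "m = char_mult F"
proof
  fix \<mu>
  show "m \<mu> = char_mult F \<mu>"
  proof (cases "dominant \<mu>")
    case True
    then have "char_mult F \<mu> = times_alt_rho F (wadd \<mu> rho)"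
      by (simp add: char_mult_def)
    also have "\<dots> = (if \<mu> \<in> {\<mu>. m \<mu> \<noteq> 0} then m \<mu> else 0)"
      unfolding F by (rule times_alt_rho_char_sum) (use assms True in auto)
    finally show ?thesis by auto
  next
    case False
    then show ?thesis
      using non_dom by (simp add: char_mult_def)
  qed
qed

section \<open>The plethysm \<open>\<psi>\<^sub>2\<close>\<close>

lemma psi2_double: "psi2 f (2 * i, 2 * j) = f (i, j)"
  by (simp add: psi2_def)

lemma psi2_odd: "odd a \<or> odd b \<Longrightarrow> psi2 f (a, b) = 0"
  by (auto simp: psi2_def)

lemma weyl_invariant_psi2:
  assumes "weyl_invariant f"
  shows "weyl_invariant (psi2 f)"
  unfolding weyl_invariant_def
proof (intro allI)
  fix a b :: int
  have s1: "f (- i, i + j) = f (i, j)" and s2: "f (i + j, - j) = f (i, j)" for i j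
    using assms unfolding weyl_invariant_def by auto
  consider i j where "a = 2 * i" "b = 2 * j" | "odd a \<or> odd b"
    by (metis evenE)
  then show "psi2 f (- a, a + b) = psi2 f (a, b) \<and> psi2 f (a + b, - b) = psi2 f (a, b)"
  proof cases
    case (1 i j)
    then have "(- a, a + b) = (2 * - i, 2 * (i + j))" "(a + b, - b) = (2 * (i + j), 2 * - j)"
      by simp_all
    with 1 show ?thesis
      by (simp only: psi2_double s1 s2)
  next
    case 2
    then show ?thesis
      by (auto simp: psi2_odd)
  qed
qed

lemma finite_support_psi2:
  assumes "finite {x. f x \<noteq> 0}"
  shows "finite {x. psi2 f x \<noteq> 0}"
proof (rule finite_subset)
  show "{x. psi2 f x \<noteq> 0} \<subseteq> (\<lambda>y. (2 * fst y, 2 * snd y)) ` {x. f x \<noteq> 0}"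
  proof
    fix x
    assume x: "x \<in> {x. psi2 f x \<noteq> 0}"
    then have "even (fst x) \<and> even (snd x)"
      by (cases x) (auto simp: psi2_def split: if_splits)
    then obtain i j where "x = (2 * i, 2 * j)"
      by (cases x) (auto elim!: evenE)
    with x show "x \<in> (\<lambda>y. (2 * fst y, 2 * snd y)) ` {x. f x \<noteq> 0}"
      by (force simp: psi2_double)
  qed
qed (use assms in simp)

lemma pleth_mult_eq:
  assumes "dominant lam"
  shows "pleth_mult lam = char_mult (psi2 (ch lam))"
  unfolding pleth_mult_def
proof (rule the_equality)
  let ?F = "psi2 (ch lam)"
  have "finite {x. ?F x \<noteq> 0}"
    using assms by (intro finite_support_psi2 finite_support_ch)
  moreover have "weyl_invariant ?F"
    using assms by (intro weyl_invariant_psi2 weyl_invariant_ch)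
  ultimately show "finite {\<mu>. char_mult ?F \<mu> \<noteq> 0} \<and> (\<forall>\<mu>. \<not> dominant \<mu> \<longrightarrow> char_mult ?F \<mu> = 0)
      \<and> ?F = (\<lambda>x. \<Sum>\<mu>\<in>{\<mu>. char_mult ?F \<mu> \<noteq> 0}. char_mult ?F \<mu> * ch \<mu> x)"
    using char_expansion finite_support_char_mult by (auto simp: char_mult_def)
next
  fix m
  assume "finite {\<mu>. m \<mu> \<noteq> 0} \<and> (\<forall>\<mu>. \<not> dominant \<mu> \<longrightarrow> m \<mu> = 0)
      \<and> psi2 (ch lam) = (\<lambda>x. \<Sum>\<mu>\<in>{\<mu>. m \<mu> \<noteq> 0}. m \<mu> * ch \<mu> x)"
  then show "m = char_mult (psi2 (ch lam))"
    by (intro char_expansion_unique) auto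
qed

lemma times_alt_rho_psi2:
  "times_alt_rho (psi2 f) (2 * i + 1, 2 * j + 1) = f (i, j) - f (i + 1, j + 1)"
  "times_alt_rho (psi2 f) (2 * i + 1, 2 * j + 2) = f (i, j + 2) - f (i + 1, j)"
  "times_alt_rho (psi2 f) (2 * i + 2, 2 * j + 1) = f (i + 2, j) - f (i, j + 1)"
  "times_alt_rho (psi2 f) (2 * i + 2, 2 * j + 2) = 0"
  by (simp_all add: times_alt_rho_Pair psi2_def add.commute)

lemma times_alt_rho_psi2_swap:
  assumes "\<And>a b. g (a, b) = f (b, a)"
  shows "times_alt_rho (psi2 g) (a, b) = times_alt_rho (psi2 f) (b, a)"
  by (simp add: times_alt_rho_Pair psi2_def assms conj_commute)

lemma times_alt_rho_psi2_weight_mult_eq_0: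
  assumes "0 \<le> m2" "m2 \<le> m1" "0 \<le> u1" "0 \<le> u2" "u1 + 2 * u2 < 2 * (m1 - m2)"
  shows "times_alt_rho (psi2 (weight_mult m1 m2)) (u1 + 1, u2 + 1) = 0"
proof -
  let ?f = "weight_mult m1 m2"
  have same: "?f (a, b) = ?f (a', b')"
    if "0 \<le> a" "0 \<le> b" "0 \<le> a'" "0 \<le> b'" "a + 2 * b < m1 - m2 + 3" "a' + 2 * b' < m1 - m2 + 3"
      and "3 dvd (a' + 2 * b' - a - 2 * b)" for a b a' b'
  proof -
    have "3 dvd (m1 + 2 * m2 - a - 2 * b) \<longleftrightarrow> 3 dvd (m1 + 2 * m2 - a' - 2 * b')"
      using that(7) by presburger
    then show ?thesis
      using weight_mult_inner_triangle[OF assms(1,2) that(1,2,5)]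
        weight_mult_inner_triangle[OF assms(1,2) that(3,4,6)]
      by simp
  qed
  consider (ee) i j where "u1 = 2 * i" "u2 = 2 * j" | (eo) i j where "u1 = 2 * i" "u2 = 2 * j + 1"
    | (oe) i j where "u1 = 2 * i + 1" "u2 = 2 * j" | (oo) i j where "u1 = 2 * i + 1" "u2 = 2 * j + 1"
    by (metis evenE oddE)
  then show ?thesis
  proof cases
    case ee
    have "?f (i, j) = ?f (i + 1, j + 1)"
      by (rule same) (use ee assms in auto)
    then show ?thesis
      using times_alt_rho_psi2(1)[of ?f i j] ee by simp
  next
    case eo
    have "?f (i, j + 2) = ?f (i + 1, j)"
      by (rule same) (use eo assms in auto)
    then show ?thesis
      using times_alt_rho_psi2(2)[of ?f i j] eo by (simp add: add.assoc)
  next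
    case oe
    have "?f (i + 2, j) = ?f (i, j + 1)"
      by (rule same) (use oe assms in auto)
    then show ?thesis
      using times_alt_rho_psi2(3)[of ?f i j] oe by (simp add: add.assoc)
  next
    case oo
    then show ?thesis
      using times_alt_rho_psi2(4)[of ?f i j] by (simp add: add.assoc)
  qed
qed

lemma pleth_mult_eq_times_alt_rho:
  assumes "0 \<le> m1" "0 \<le> m2" "0 \<le> u1" "0 \<le> u2"
  shows "pleth_mult (m1, m2) (u1, u2) = times_alt_rho (psi2 (weight_mult m1 m2)) (u1 + 1, u2 + 1)"
  using assms by (simp add: pleth_mult_eq char_mult_def dominant_def ch_eq_weight_mult wadd_def rho_def)

theorem mainTheorem15:
  fixes m1 m2 u1 u2 :: nat
  assumes "pleth_mult (int m1, int m2) (int u1, int u2) \<noteq> 0"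
  shows "(m1 \<ge> m2 \<longrightarrow> int u1 + 2 * int u2 \<ge> 2 * (int m1 - int m2)) \<and>
         (m1 \<le> m2 \<longrightarrow> 2 * int u1 + int u2 \<ge> 2 * (int m2 - int m1))"
proof -
  let ?A = "\<lambda>m m' u u'. times_alt_rho (psi2 (weight_mult (int m) (int m'))) (int u + 1, int u' + 1)"
  have nz: "?A m1 m2 u1 u2 \<noteq> 0"
    using assms by (simp add: pleth_mult_eq_times_alt_rho)
  have dual: "?A m1 m2 u1 u2 = ?A m2 m1 u2 u1"
    by (rule times_alt_rho_psi2_swap) (rule weight_mult_dual[symmetric])
  show ?thesis
  proof (intro conjI impI)
    assume "m2 \<le> m1"
    show "int u1 + 2 * int u2 \<ge> 2 * (int m1 - int m2)"
      using nz times_alt_rho_psi2_weight_mult_eq_0[of "int m2" "int m1" "int u1" "int u2"]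
        \<open>m2 \<le> m1\<close> by linarith
  next
    assume "m1 \<le> m2"
    show "2 * int u1 + int u2 \<ge> 2 * (int m2 - int m1)"
      using nz dual times_alt_rho_psi2_weight_mult_eq_0[of "int m1" "int m2" "int u2" "int u1"]
        \<open>m1 \<le> m2\<close> by linarith
  qed
qed

end
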